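(* Let $\mathfrak g$ be a Lie algebra in which every abelian ideal is central. Then: (a) every nilpotent ideal $\mathfrak n$ of $\mathfrak g$ satisfies $C^2(\mathfrak n)\subseteq\mathfrak z(\mathfrak g)$ and $C^3(\mathfrak n)=\{0\}$; (b) if $\mathfrak r$ is a solvable ideal of $\mathfrak g$ and $n\in\mathbb N_0$ is maximal with $D^n(\mathfrak r)\neq\{0\}$, then $D^n(\mathfrak r)$ is central in $\mathfrak g$; (c) the center of the Lie algebra $\mathrm{ad}\,\mathfrak g$ is trivial, $\mathfrak z(\mathrm{ad}\,\mathfrak g)=\{0\}$; (d) if $\mathfrak g$ is nilpotent, then $\mathfrak g$ is abelian.
   Context: For a Lie algebra $\mathfrak h$: the derived series is $D^0(\mathfrak h)=\mathfrak h$, $D^{n+1}(\mathfrak h)=[D^n(\mathfrak h),D^n(\mathfrak h)]$; the descending central series is $C^1(\mathfrak h)=\mathfrak h$, $C^{n+1}(\mathfrak h)=[\mathfrak h,C^n(\mathfrak h)]$. $\mathfrak z(\mathfrak g)$ denotes the center of $\mathfrak g$. *)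

theory Defs
  imports Complex_Main
begin

definition lie_algebra :: "('k::field \<Rightarrow> 'a::ab_group_add \<Rightarrow> 'a) \<Rightarrow> ('a \<Rightarrow> 'a \<Rightarrow> 'a) \<Rightarrow> bool" where
  "lie_algebra sm br \<longleftrightarrow> vector_space sm \<and>
     (\<forall>x y z. br (x + y) z = br x z + br y z) \<and>
     (\<forall>x y z. br x (y + z) = br x y + br x z) \<and>
     (\<forall>c x y. br (sm c x) y = sm c (br x y)) \<and>
     (\<forall>c x y. br x (sm c y) = sm c (br x y)) \<and>
     (\<forall>x. br x x = 0) \<and>
     (\<forall>x y z. br x (br y z) + br y (br z x) + br z (br x y) = 0)"

definition lie_bracket_set :: "('k::field \<Rightarrow> 'a::ab_group_add \<Rightarrow> 'a) \<Rightarrow> ('a \<Rightarrow> 'a \<Rightarrow> 'a) \<Rightarrow> 'a set \<Rightarrow> 'a set \<Rightarrow> 'a set" where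
  "lie_bracket_set sm br A B = module.span sm {br a b | a b. a \<in> A \<and> b \<in> B}"

definition lie_ideal :: "('k::field \<Rightarrow> 'a::ab_group_add \<Rightarrow> 'a) \<Rightarrow> ('a \<Rightarrow> 'a \<Rightarrow> 'a) \<Rightarrow> 'a set \<Rightarrow> bool" where
  "lie_ideal sm br I \<longleftrightarrow> module.subspace sm I \<and> (\<forall>x y. y \<in> I \<longrightarrow> br x y \<in> I)"

definition lie_center :: "('a \<Rightarrow> 'a \<Rightarrow> 'a::ab_group_add) \<Rightarrow> 'a set" where
  "lie_center br = {z. \<forall>x. br x z = 0}"

primrec derived_series :: "('k::field \<Rightarrow> 'a::ab_group_add \<Rightarrow> 'a) \<Rightarrow> ('a \<Rightarrow> 'a \<Rightarrow> 'a) \<Rightarrow> 'a set \<Rightarrow> nat \<Rightarrow> 'a set" where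
  "derived_series sm br h 0 = h"
| "derived_series sm br h (Suc n) =
     lie_bracket_set sm br (derived_series sm br h n) (derived_series sm br h n)"

text \<open>Descending central series: C^1 h = h, C^(n+1) h = [h, C^n h]
  (index 0 is unused by the paper; we set C^0 h = h).\<close>
fun lower_central_series :: "('k::field \<Rightarrow> 'a::ab_group_add \<Rightarrow> 'a) \<Rightarrow> ('a \<Rightarrow> 'a \<Rightarrow> 'a) \<Rightarrow> 'a set \<Rightarrow> nat \<Rightarrow> 'a set" where
  "lower_central_series sm br h 0 = h"
| "lower_central_series sm br h (Suc 0) = h"
| "lower_central_series sm br h (Suc (Suc n)) =
     lie_bracket_set sm br h (lower_central_series sm br h (Suc n))"

definition lie_nilpotent :: "('k::field \<Rightarrow> 'a::ab_group_add \<Rightarrow> 'a) \<Rightarrow> ('a \<Rightarrow> 'a \<Rightarrow> 'a) \<Rightarrow> 'a set \<Rightarrow> bool" where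
  "lie_nilpotent sm br h \<longleftrightarrow> (\<exists>k. lower_central_series sm br h k = {0})"

definition lie_solvable :: "('k::field \<Rightarrow> 'a::ab_group_add \<Rightarrow> 'a) \<Rightarrow> ('a \<Rightarrow> 'a \<Rightarrow> 'a) \<Rightarrow> 'a set \<Rightarrow> bool" where
  "lie_solvable sm br h \<longleftrightarrow> (\<exists>k. derived_series sm br h k = {0})"

definition ad :: "('a \<Rightarrow> 'a \<Rightarrow> 'a) \<Rightarrow> 'a \<Rightarrow> 'a \<Rightarrow> 'a" where
  "ad br x = br x"

definition endo_commutator :: "('a \<Rightarrow> 'a) \<Rightarrow> ('a \<Rightarrow> 'a) \<Rightarrow> 'a \<Rightarrow> 'a::ab_group_add" where
  "endo_commutator f g = (\<lambda>z. f (g z) - g (f z))"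

definition ad_center :: "('a \<Rightarrow> 'a \<Rightarrow> 'a::ab_group_add) \<Rightarrow> ('a \<Rightarrow> 'a) set" where
  "ad_center br = {f \<in> range (ad br). \<forall>g \<in> range (ad br). endo_commutator f g = (\<lambda>_. 0)}"

end

theory Submission imports Defs begin

text \<open>If every bracket [x,y] is central, then the span of x and the centre is an abelian
  ideal, hence central, so x is central; this gives (c) and (d).  For (b), the last nonzero
  term of the derived series is an abelian ideal.  For (a), if [n, C^(j+2)] is central, the
  Leibniz rule makes C^(j+2) = [n, C^(j+1)] abelian, hence central; descending from a
  vanishing term of the lower central series gives C^2 central, and then C^3 = [n, C^2] = 0.\<close>

lemma lower_central_series_2:
  "lower_central_series sm br N 2 = lie_bracket_set sm br N N"
  by (simp only: numeral_2_eq_2 lower_central_series.simps)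

lemma lower_central_series_3:
  "lower_central_series sm br N 3 = lie_bracket_set sm br N (lower_central_series sm br N 2)"
  by (simp only: numeral_3_eq_3 numeral_2_eq_2 lower_central_series.simps)

locale lie_alg = module sm for sm :: "'k::field \<Rightarrow> 'a::ab_group_add \<Rightarrow> 'a" +
  fixes br :: "'a \<Rightarrow> 'a \<Rightarrow> 'a"
  assumes bracket_add_left: "br (x + y) z = br x z + br y z"
    and bracket_add_right: "br x (y + z) = br x y + br x z"
    and bracket_scale_left: "br (sm c x) y = sm c (br x y)"
    and bracket_scale_right: "br x (sm c y) = sm c (br x y)"
    and bracket_self: "br x x = 0"
    and jacobi: "br x (br y z) + br y (br z x) + br z (br x y) = 0"
begin

lemma bracket_0_left [simp]: "br 0 x = 0"
  using bracket_add_left[of 0 0 x] by simp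

lemma bracket_0_right [simp]: "br x 0 = 0"
  using bracket_add_right[of x 0 0] by simp

lemma bracket_minus_right: "br x (- y) = - br x y"
proof -
  have "br x y + br x (- y) = 0"
    using bracket_add_right[of x y "- y"] by simp
  then show ?thesis by (simp add: minus_unique)
qed

lemma bracket_anticomm: "br x y = - br y x"
proof -
  have "br x y + br y x = br (x + y) (x + y)"
    by (simp only: bracket_add_left bracket_add_right) (simp add: bracket_self)
  also have "\<dots> = 0" by (rule bracket_self)
  finally show ?thesis by (simp add: eq_neg_iff_add_eq_0)
qed

lemma bracket_eq_0_commute: "br x y = 0 \<longleftrightarrow> br y x = 0"
  by (metis bracket_anticomm neg_0_equal_iff_equal)

lemma bracket_leibniz: "br x (br a b) = br (br x a) b + br a (br x b)"
proof -
  have "br x (br a b) = - br a (br b x) - br b (br x a)"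
    using jacobi[of x a b] by (simp add: eq_neg_iff_add_eq_0 algebra_simps)
  also have "br a (br b x) = - br a (br x b)"
    by (simp add: bracket_anticomm[of b x] bracket_minus_right)
  also have "br b (br x a) = - br (br x a) b"
    by (rule bracket_anticomm)
  finally show ?thesis by simp
qed

lemma bracket_span_left_eq_0:
  "a \<in> span G \<Longrightarrow> (\<And>g. g \<in> G \<Longrightarrow> br g b = 0) \<Longrightarrow> br a b = 0"
  by (induction a rule: span_induct_alt) (auto simp: bracket_add_left bracket_scale_left)

lemma bracket_span_right_mem:
  "b \<in> span G \<Longrightarrow> subspace T \<Longrightarrow> (\<And>g. g \<in> G \<Longrightarrow> br a g \<in> T) \<Longrightarrow> br a b \<in> T"
  by (induction b rule: span_induct_alt)
    (auto simp: bracket_add_right bracket_scale_right subspace_0 subspace_add subspace_scale)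

lemma bracket_mem_bracket_set: "a \<in> A \<Longrightarrow> b \<in> B \<Longrightarrow> br a b \<in> lie_bracket_set sm br A B"
  unfolding lie_bracket_set_def by (rule span_base) blast

lemma bracket_set_subset:
  "subspace T \<Longrightarrow> (\<And>a b. a \<in> A \<Longrightarrow> b \<in> B \<Longrightarrow> br a b \<in> T) \<Longrightarrow> lie_bracket_set sm br A B \<subseteq> T"
  unfolding lie_bracket_set_def by (rule span_minimal) auto

lemma bracket_set_eq_0_iff:
  "lie_bracket_set sm br A B = {0} \<longleftrightarrow> (\<forall>a\<in>A. \<forall>b\<in>B. br a b = 0)"
proof
  assume "lie_bracket_set sm br A B = {0}"
  then show "\<forall>a\<in>A. \<forall>b\<in>B. br a b = 0"
    by (metis bracket_mem_bracket_set singletonD)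
next
  assume "\<forall>a\<in>A. \<forall>b\<in>B. br a b = 0"
  then have "lie_bracket_set sm br A B \<subseteq> {0}"
    by (intro bracket_set_subset) auto
  moreover have "0 \<in> lie_bracket_set sm br A B"
    unfolding lie_bracket_set_def by (rule span_zero)
  ultimately show "lie_bracket_set sm br A B = {0}" by blast
qed

lemma lie_ideal_bracket_set:
  assumes "lie_ideal sm br A" "lie_ideal sm br B"
  shows "lie_ideal sm br (lie_bracket_set sm br A B)"
proof -
  let ?G = "{br a b |a b. a \<in> A \<and> b \<in> B}"
  have generators: "br x g \<in> span ?G" if "g \<in> ?G" for x g
  proof -
    obtain a b where g: "g = br a b" and "a \<in> A" "b \<in> B" using \<open>g \<in> ?G\<close> by blast
    then have "br x a \<in> A" "br x b \<in> B" using assms unfolding lie_ideal_def by auto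
    with \<open>a \<in> A\<close> \<open>b \<in> B\<close> have "br (br x a) b \<in> span ?G" "br a (br x b) \<in> span ?G"
      by (auto intro!: span_base)
    then show ?thesis
      unfolding g bracket_leibniz[of x a b] by (rule span_add)
  qed
  show ?thesis
    unfolding lie_ideal_def lie_bracket_set_def
  proof (intro conjI allI impI)
    fix x y
    assume "y \<in> span ?G"
    then show "br x y \<in> span ?G"
      by (rule bracket_span_right_mem) (simp_all add: generators)
  qed simp
qed

lemma lie_ideal_derived_series:
  "lie_ideal sm br R \<Longrightarrow> lie_ideal sm br (derived_series sm br R n)"
  by (induction n) (auto intro: lie_ideal_bracket_set)

lemma lie_ideal_lower_central_series:
  assumes "lie_ideal sm br N"
  shows "lie_ideal sm br (lower_central_series sm br N j)"
proof (cases j)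
  case (Suc n)
  show ?thesis unfolding Suc
    by (induction n) (simp_all add: assms lie_ideal_bracket_set)
qed (simp add: assms)

lemma lower_central_series_subset:
  assumes "lie_ideal sm br N"
  shows "lower_central_series sm br N j \<subseteq> N"
proof (cases j)
  case (Suc n)
  have "subspace N" "\<And>a b. b \<in> N \<Longrightarrow> br a b \<in> N"
    using assms unfolding lie_ideal_def by auto
  then show ?thesis unfolding Suc
  proof (induction n)
    case (Suc n)
    have "lie_bracket_set sm br N (lower_central_series sm br N (Suc n)) \<subseteq> N"
      using Suc by (intro bracket_set_subset) auto
    then show ?case by simp
  qed simp
qed simp

lemma lower_central_series_eq_0_mono:
  assumes "lower_central_series sm br N j = {0}" "j \<le> k"
  shows "lower_central_series sm br N k = {0}"
  using assms(2,1)
proof (induction k rule: dec_induct)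
  case (step k)
  then show ?case
    by (cases k) (simp_all add: bracket_set_eq_0_iff)
qed

lemma lie_center_bracket_left: "z \<in> lie_center br \<Longrightarrow> br z w = 0"
  unfolding lie_center_def using bracket_eq_0_commute by blast

lemma lie_center_bracket_right: "z \<in> lie_center br \<Longrightarrow> br w z = 0"
  unfolding lie_center_def by blast

text \<open>A generator [n,c] of [N,K] commutes with b \<in> [N,K] by the Leibniz rule, since both
  [c,b] and [n,b] lie in [N,[N,K]].\<close>
lemma bracket_set_abelian_if_central:
  assumes "K \<subseteq> N"
    and central: "lie_bracket_set sm br N (lie_bracket_set sm br N K) \<subseteq> lie_center br"
  shows "lie_bracket_set sm br (lie_bracket_set sm br N K) (lie_bracket_set sm br N K) = {0}"
  unfolding bracket_set_eq_0_iff
proof (intro ballI)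
  fix a b
  assume a: "a \<in> lie_bracket_set sm br N K" and b: "b \<in> lie_bracket_set sm br N K"
  have generators: "br (br n c) b = 0" if "n \<in> N" "c \<in> K" for n c
  proof -
    have "br c b \<in> lie_center br" "br n b \<in> lie_center br"
      using that \<open>K \<subseteq> N\<close> b central bracket_mem_bracket_set by blast+
    then show ?thesis
      using bracket_leibniz[of n c b] by (simp add: lie_center_bracket_right)
  qed
  show "br a b = 0"
    using a unfolding lie_bracket_set_def
    by (rule bracket_span_left_eq_0) (use generators in blast)
qed

end

locale lie_alg_abelian_ideals_central = lie_alg +
  assumes abelian_ideal_central:
    "lie_ideal sm br I \<Longrightarrow> lie_bracket_set sm br I I = {0} \<Longrightarrow> I \<subseteq> lie_center br"
begin

lemma central_if_brackets_central:
  assumes "\<And>y. br x y \<in> lie_center br"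
  shows "x \<in> lie_center br"
proof -
  define G where "G = insert x (lie_center br)"
  define I where "I = span G"
  have generators_commute: "br g h = 0" if "g \<in> G" "h \<in> G" for g h
    using that bracket_self lie_center_bracket_left lie_center_bracket_right
    unfolding G_def by auto
  have "br a b = 0" if "a \<in> I" "b \<in> I" for a b
  proof -
    have "br b g = 0" if "g \<in> G" for g
      using \<open>b \<in> I\<close> unfolding I_def
      by (rule bracket_span_left_eq_0) (simp add: generators_commute that)
    then have "br g b = 0" if "g \<in> G" for g
      using that bracket_eq_0_commute by blast
    with \<open>a \<in> I\<close> show ?thesis
      unfolding I_def by (rule bracket_span_left_eq_0)
  qed
  then have "lie_bracket_set sm br I I = {0}"
    by (simp add: bracket_set_eq_0_iff)
  moreover have "br w g \<in> I" if "g \<in> G" for w g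
  proof (cases "g = x")
    case True
    have "br x w \<in> I"
      using assms span_superset unfolding I_def G_def by blast
    then show ?thesis
      unfolding True I_def by (simp add: bracket_anticomm[of w x] span_neg)
  next
    case False
    then show ?thesis
      using that unfolding I_def G_def by (simp add: lie_center_bracket_right span_zero)
  qed
  then have "lie_ideal sm br I"
    unfolding lie_ideal_def I_def by (auto intro: bracket_span_right_mem)
  ultimately have "I \<subseteq> lie_center br" using abelian_ideal_central by blast
  then show ?thesis
    unfolding I_def G_def using span_superset by blast
qed

lemma derived_series_last_central:
  assumes "lie_ideal sm br R" "derived_series sm br R (Suc n) = {0}"
  shows "derived_series sm br R n \<subseteq> lie_center br"
  using assms by (intro abelian_ideal_central lie_ideal_derived_series) simp_all

lemma lower_central_series_central_step:
  assumes N: "lie_ideal sm br N"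
    and central: "lower_central_series sm br N (Suc (Suc (Suc j))) \<subseteq> lie_center br"
  shows "lower_central_series sm br N (Suc (Suc j)) \<subseteq> lie_center br"
proof (rule abelian_ideal_central)
  show "lie_ideal sm br (lower_central_series sm br N (Suc (Suc j)))"
    using N by (rule lie_ideal_lower_central_series)
  have "lower_central_series sm br N (Suc j) \<subseteq> N"
    using N by (rule lower_central_series_subset)
  with central show "lie_bracket_set sm br (lower_central_series sm br N (Suc (Suc j)))
      (lower_central_series sm br N (Suc (Suc j))) = {0}"
    using bracket_set_abelian_if_central by simp
qed

lemma lower_central_series_central_descend:
  assumes N: "lie_ideal sm br N"
  shows "lower_central_series sm br N (Suc (Suc (j + d))) \<subseteq> lie_center br
    \<Longrightarrow> lower_central_series sm br N (Suc (Suc j)) \<subseteq> lie_center br"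
proof (induction d arbitrary: j)
  case (Suc d)
  then have "lower_central_series sm br N (Suc (Suc (Suc j))) \<subseteq> lie_center br"
    using Suc.IH[of "Suc j"] by simp
  with N show ?case by (rule lower_central_series_central_step)
qed simp

lemma lower_central_series_2_central:
  assumes N: "lie_ideal sm br N" and "lower_central_series sm br N k = {0}"
  shows "lower_central_series sm br N 2 \<subseteq> lie_center br"
proof -
  have "k \<le> Suc (Suc (0 + k))" by linarith
  with assms(2) have "lower_central_series sm br N (Suc (Suc (0 + k))) = {0}"
    by (rule lower_central_series_eq_0_mono)
  then have "lower_central_series sm br N (Suc (Suc (0 + k))) \<subseteq> lie_center br"
    by (simp add: lie_center_def)
  then have "lower_central_series sm br N (Suc (Suc 0)) \<subseteq> lie_center br"
    by (rule lower_central_series_central_descend[OF N])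
  then show ?thesis by (simp only: numeral_2_eq_2)
qed

lemma lower_central_series_3_eq_0:
  assumes "lie_ideal sm br N" "lower_central_series sm br N k = {0}"
  shows "lower_central_series sm br N 3 = {0}"
  using lower_central_series_2_central[OF assms]
  by (auto simp: lower_central_series_3 bracket_set_eq_0_iff intro: lie_center_bracket_right)

lemma ad_center_trivial: "ad_center br = {\<lambda>_. 0}"
proof
  show "ad_center br \<subseteq> {\<lambda>_. 0}"
  proof
    fix f assume f: "f \<in> ad_center br"
    then obtain x where x: "f = br x" unfolding ad_center_def ad_def by auto
    have "br (br x y) z = 0" for y z
    proof -
      have "endo_commutator (br x) (br y) = (\<lambda>_. 0)"
        using f x unfolding ad_center_def ad_def by auto
      then have "br x (br y z) - br y (br x z) = 0"
        unfolding endo_commutator_def by (metis (no_types))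
      then show ?thesis using bracket_leibniz[of x y z] by simp
    qed
    then have "br x y \<in> lie_center br" for y
      unfolding lie_center_def using bracket_eq_0_commute by blast
    then have "x \<in> lie_center br" by (rule central_if_brackets_central)
    then show "f \<in> {\<lambda>_. 0}" using x by (auto simp: fun_eq_iff lie_center_bracket_left)
  qed
  show "{\<lambda>_. 0} \<subseteq> ad_center br"
    unfolding ad_center_def ad_def endo_commutator_def
    by (auto intro!: image_eqI[of _ _ 0])
qed

lemma nilpotent_imp_abelian:
  assumes "lower_central_series sm br UNIV k = {0}"
  shows "lie_bracket_set sm br UNIV UNIV = {0}"
proof -
  have "lie_ideal sm br UNIV" unfolding lie_ideal_def by simp
  then have "lie_bracket_set sm br UNIV UNIV \<subseteq> lie_center br"
    using lower_central_series_2_central assms by (simp add: lower_central_series_2)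
  then have "x \<in> lie_center br" for x
    by (blast intro: central_if_brackets_central bracket_mem_bracket_set)
  then show ?thesis by (simp add: bracket_set_eq_0_iff lie_center_bracket_right)
qed

end

lemma lie_alg_if_lie_algebra: "lie_algebra sm br \<Longrightarrow> lie_alg sm br"
  unfolding lie_algebra_def lie_alg_def lie_alg_axioms_def by (auto simp: module_iff_vector_space)

theorem lemma1p4:
  fixes sm :: "'k::field \<Rightarrow> 'a::ab_group_add \<Rightarrow> 'a"
    and br :: "'a \<Rightarrow> 'a \<Rightarrow> 'a"
  assumes "lie_algebra sm br"
    and "\<forall>I. lie_ideal sm br I \<and> lie_bracket_set sm br I I = {0} \<longrightarrow> I \<subseteq> lie_center br"
  shows "(\<forall>N. lie_ideal sm br N \<and> lie_nilpotent sm br N \<longrightarrow>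
             lower_central_series sm br N 2 \<subseteq> lie_center br \<and> lower_central_series sm br N 3 = {0})
       \<and> (\<forall>R n. lie_ideal sm br R \<and> lie_solvable sm br R \<and> derived_series sm br R n \<noteq> {0}
             \<and> (\<forall>m>n. derived_series sm br R m = {0}) \<longrightarrow> derived_series sm br R n \<subseteq> lie_center br)
       \<and> ad_center br = {\<lambda>_. 0}
       \<and> (lie_nilpotent sm br UNIV \<longrightarrow> lie_bracket_set sm br UNIV UNIV = {0})"
proof -
  interpret lie_alg_abelian_ideals_central sm br
  proof (rule lie_alg_abelian_ideals_central.intro)
    show "lie_alg sm br" using assms(1) by (rule lie_alg_if_lie_algebra)
    show "lie_alg_abelian_ideals_central_axioms sm br"
      by (rule lie_alg_abelian_ideals_central_axioms.intro) (use assms(2) in blast)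
  qed
  show ?thesis
  proof (intro conjI allI impI)
    fix N
    assume "lie_ideal sm br N \<and> lie_nilpotent sm br N"
    then obtain k where N: "lie_ideal sm br N" and k: "lower_central_series sm br N k = {0}"
      unfolding lie_nilpotent_def by blast
    show "lower_central_series sm br N 2 \<subseteq> lie_center br"
      using N k by (rule lower_central_series_2_central)
    show "lower_central_series sm br N 3 = {0}"
      using N k by (rule lower_central_series_3_eq_0)
  next
    fix R n
    assume "lie_ideal sm br R \<and> lie_solvable sm br R \<and> derived_series sm br R n \<noteq> {0}
      \<and> (\<forall>m>n. derived_series sm br R m = {0})"
    then show "derived_series sm br R n \<subseteq> lie_center br"
      using derived_series_last_central by blast
  next
    show "ad_center br = {\<lambda>_. 0}" by (rule ad_center_trivial)
  next
    assume "lie_nilpotent sm br UNIV"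
    then show "lie_bracket_set sm br UNIV UNIV = {0}"
      unfolding lie_nilpotent_def using nilpotent_imp_abelian by blast
  qed
qed

end
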